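(* Let $x_1,x_2,\dots,y_1,y_2,\dots$ be indeterminates and $$F(q)=\sum_{d\ge0}\ \sum_{0=d_0<d_1<\dots<d_r=d}\frac{\prod_{i=1}^r\left(y_{d_i-d_{i-1}}+x_{d_i-d_{i-1}}d_{i-1}\right)}{r!}q^d\in\mathbb Q[x_k,y_k]_{k\ge1}[[q]]$$ (the $d=0$ term being $1$, from $r=0$). Then every coefficient of $q^d$ in $\log F(q)$ is a polynomial of degree at most one in the variables $y_1,y_2,\dots$. *)

theory Defs
  imports "HOL-Library.Poly_Mapping" "HOL-Computational_Algebra.Formal_Power_Series"
begin

datatype var = X nat | Y nat

text \<open>The polynomial ring Q[x_k, y_k]_(k >= 1): finitely supported maps from monomials
  (finitely supported exponent vectors) to rational coefficients.\<close>
type_synonym mpoly = "(var \<Rightarrow>\<^sub>0 nat) \<Rightarrow>\<^sub>0 rat"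

definition pvar :: "var \<Rightarrow> mpoly" where
  "pvar v = Poly_Mapping.single (Poly_Mapping.single v 1) 1"

definition pconst :: "rat \<Rightarrow> mpoly" where
  "pconst c = Poly_Mapping.single 0 c"

text \<open>Chains 0 = d_0 < d_1 < ... < d_r = d, as lists [d_0, ..., d_r].\<close>
definition chains :: "nat \<Rightarrow> nat list set" where
  "chains d = {ds. ds \<noteq> [] \<and> hd ds = 0 \<and> last ds = d \<and> sorted_wrt (<) ds}"

definition chain_term :: "nat list \<Rightarrow> mpoly" where
  "chain_term ds = (let r = length ds - 1 in
     pconst (1 / of_nat (fact r)) *
     (\<Prod>i\<in>{1..r}. pvar (Y (ds!i - ds!(i-1))) + pvar (X (ds!i - ds!(i-1))) * of_nat (ds!(i-1))))"

definition F_series :: "mpoly fps" where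
  "F_series = Abs_fps (\<lambda>d. \<Sum>ds\<in>chains d. chain_term ds)"

text \<open>Logarithm of a power series with constant term 1 over a Q-algebra:
  log F = sum_{n>=1} (-1)^(n+1) (F - 1)^n / n (the coefficient of q^d is a finite sum).\<close>
definition fps_log :: "mpoly fps \<Rightarrow> mpoly fps" where
  "fps_log f = Abs_fps (\<lambda>d. \<Sum>n\<in>{1..d}. pconst ((-1)^(n+1) / of_nat n) * fps_nth ((f - 1)^n) d)"

definition y_degree :: "(var \<Rightarrow>\<^sub>0 nat) \<Rightarrow> nat" where
  "y_degree m = (\<Sum>v\<in>Poly_Mapping.keys m. case v of Y _ \<Rightarrow> Poly_Mapping.lookup m v | X _ \<Rightarrow> 0)"

end

theory Submission
  imports Defs
begin

(* Let euler multiply every monomial by its total degree and let fps_XD be q d/dq. Each factor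
   y_k + x_k d_(i-1) of a chain term is homogeneous of degree one, so euler scales a chain with r
   steps by r; splitting off the last step of a chain then gives euler F = Y F + X (q F'), where
   Y = sum y_k q^k and X = sum x_k q^k. Both operators are derivations of the power series ring
   that see only coefficients of lower order, hence satisfy F * D (log F) = D F. Dividing by F
   yields euler (log F) = Y + X (q (log F)'), so every monomial of positive degree in the
   coefficient of q^d in log F is either y_d or x_i times a monomial of lower degree occurring in
   log F, and induction on the degree bounds its y-degree by one. *)

unbundle fps_syntax

definition weighted_degree :: "('v \<Rightarrow> nat) \<Rightarrow> ('v \<Rightarrow>\<^sub>0 nat) \<Rightarrow> nat" where
  "weighted_degree w m = (\<Sum>v\<in>Poly_Mapping.keys m. w v * Poly_Mapping.lookup m v)"

abbreviation total_degree :: "('v \<Rightarrow>\<^sub>0 nat) \<Rightarrow> nat" where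
  "total_degree \<equiv> weighted_degree (\<lambda>_. 1)"

lemma weighted_degree_add:
  "weighted_degree w (a + b) = weighted_degree w a + weighted_degree w b"
  unfolding weighted_degree_def by (rule setsum_keys_plus_distrib) (simp_all add: distrib_left)

lemma weighted_degree_single [simp]: "weighted_degree w (Poly_Mapping.single v n) = w v * n"
  by (cases "n = 0") (simp_all add: weighted_degree_def)

lemma weighted_degree_zero [simp]: "weighted_degree w 0 = 0"
  by (simp add: weighted_degree_def)

lemma weighted_degree_mono:
  "(\<And>v. w v \<le> w' v) \<Longrightarrow> weighted_degree w m \<le> weighted_degree w' m"
  unfolding weighted_degree_def by (intro sum_mono mult_right_mono) auto

lemma y_degree_eq_weighted_degree:
  "y_degree = weighted_degree (\<lambda>v. case v of X _ \<Rightarrow> 0 | Y _ \<Rightarrow> 1)"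
  by (auto simp: fun_eq_iff y_degree_def weighted_degree_def split: var.split intro!: sum.cong)

lemma y_degree_le_total_degree: "y_degree m \<le> total_degree m"
  unfolding y_degree_eq_weighted_degree by (rule weighted_degree_mono) (simp split: var.split)

lemma y_degree_add: "y_degree (a + b) = y_degree a + y_degree b"
  by (simp add: y_degree_eq_weighted_degree weighted_degree_add)

lemma y_degree_single_X [simp]: "y_degree (Poly_Mapping.single (X k) n) = 0"
  and y_degree_single_Y [simp]: "y_degree (Poly_Mapping.single (Y k) n) = n"
  by (simp_all add: y_degree_eq_weighted_degree)

lemma poly_mapping_sum_single:
  "(\<Sum>k\<in>Poly_Mapping.keys p. Poly_Mapping.single k (Poly_Mapping.lookup p k)) = p"
  by (rule poly_mapping_eqI)
     (auto simp: lookup_sum lookup_single when_def in_keys_iff sum.delta' simp del: lookup_single_eq)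

definition euler :: "(('v \<Rightarrow>\<^sub>0 nat) \<Rightarrow>\<^sub>0 'a::comm_semiring_1) \<Rightarrow> ('v \<Rightarrow>\<^sub>0 nat) \<Rightarrow>\<^sub>0 'a" where
  "euler p = Poly_Mapping.mapp (\<lambda>m c. of_nat (total_degree m) * c) p"

lemma lookup_euler:
  "Poly_Mapping.lookup (euler p) m = of_nat (total_degree m) * Poly_Mapping.lookup p m"
  by (auto simp: euler_def lookup_mapp in_keys_iff when_def)

lemma euler_add: "euler (p + q) = euler p + euler q"
  by (rule poly_mapping_eqI) (simp add: lookup_euler lookup_add distrib_left)

lemma euler_sum: "euler (sum f A) = (\<Sum>x\<in>A. euler (f x))"
  by (rule poly_mapping_eqI) (simp add: lookup_euler lookup_sum sum_distrib_left)

lemma euler_single: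
  "euler (Poly_Mapping.single m c) = Poly_Mapping.single m (of_nat (total_degree m) * c)"
  by (rule poly_mapping_eqI) (simp add: lookup_euler lookup_single when_def)

lemma euler_mult:
  fixes p q :: "('v \<Rightarrow>\<^sub>0 nat) \<Rightarrow>\<^sub>0 'a::comm_semiring_1"
  shows "euler (p * q) = euler p * q + p * euler q"
proof -
  have single: "euler (Poly_Mapping.single a c * Poly_Mapping.single b e) =
      euler (Poly_Mapping.single a c) * Poly_Mapping.single b e +
      Poly_Mapping.single a c * euler (Poly_Mapping.single b e)"
    for a b :: "'v \<Rightarrow>\<^sub>0 nat" and c e :: 'a
    by (simp add: euler_single mult_single weighted_degree_add algebra_simps flip: single_add)
  let ?monomials = "\<lambda>r. \<Sum>a\<in>Poly_Mapping.keys r. Poly_Mapping.single a (Poly_Mapping.lookup r a)"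
  have "euler (?monomials p * ?monomials q) =
      euler (?monomials p) * ?monomials q + ?monomials p * euler (?monomials q)"
    by (simp only: euler_sum sum_product single sum.distrib)
  then show ?thesis by (simp only: poly_mapping_sum_single)
qed

lemma euler_pconst [simp]: "euler (pconst c) = 0"
  by (simp add: pconst_def euler_single)

lemma euler_of_nat [simp]: "euler (of_nat n :: ('v \<Rightarrow>\<^sub>0 nat) \<Rightarrow>\<^sub>0 'a::comm_semiring_1) = 0"
  by (simp add: euler_single flip: single_of_nat)

lemma euler_zero [simp]: "euler 0 = 0"
  by (rule poly_mapping_eqI) (simp add: lookup_euler)

lemma euler_one [simp]: "euler (1 :: ('v \<Rightarrow>\<^sub>0 nat) \<Rightarrow>\<^sub>0 'a::comm_semiring_1) = 0"
  using euler_of_nat[of 1] by simp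

lemma euler_prod_linear_factors:
  assumes "\<And>i. i \<in> A \<Longrightarrow> euler (g i) = g i"
  shows "euler (prod g A) = of_nat (card A) * prod g A"
  using assms by (induction A rule: infinite_finite_induct) (simp_all add: euler_mult algebra_simps)

lemma euler_pvar [simp]: "euler (pvar v) = pvar v"
  by (simp add: pvar_def euler_single)

lemma pconst_mult: "pconst a * pconst b = pconst (a * b)"
  by (simp add: pconst_def mult_single)

lemma pconst_one [simp]: "pconst 1 = 1"
  by (simp add: pconst_def)

lemma pconst_of_nat: "pconst (of_nat n) = of_nat n"
  by (simp add: pconst_def)

lemma pconst_power: "pconst a ^ n = pconst (a ^ n)"
  by (induction n) (simp_all add: pconst_mult flip: pconst_of_nat)

lemma pconst_minus: "pconst (- a) = - pconst a"
  by (simp add: pconst_def single_uminus)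

definition log_one_plus_trunc :: "nat \<Rightarrow> mpoly fps \<Rightarrow> mpoly fps" where
  "log_one_plus_trunc N u = (\<Sum>n\<in>{1..N}. fps_const (pconst ((-1) ^ (n + 1) / of_nat n)) * u ^ n)"

lemma fps_log_nth_eq_trunc:
  assumes "F $ 0 = 1" "j \<le> N"
  shows "fps_log F $ j = log_one_plus_trunc N (F - 1) $ j"
proof -
  have "(F - 1) ^ n $ j = 0" if "j < n" for n
    using startsby_zero_power_prefix[of "F - 1" n] assms(1) that by simp
  then have "log_one_plus_trunc N (F - 1) $ j =
      (\<Sum>n\<in>{1..j}. pconst ((-1) ^ (n + 1) / of_nat n) * (F - 1) ^ n $ j)"
    unfolding log_one_plus_trunc_def fps_sum_nth fps_mult_left_const_nth
    by (intro sum.mono_neutral_right) (use assms(2) in auto)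
  then show ?thesis by (simp add: fps_log_def)
qed

lemma log_coeff_mult_of_nat:
  assumes "n \<ge> 1"
  shows "fps_const (pconst ((-1) ^ (n + 1) / of_nat n)) * of_nat n = ((-1) ^ (n - 1) :: mpoly fps)"
proof -
  have "fps_const (pconst ((-1) ^ (n + 1) / of_nat n)) * of_nat n =
      fps_const (pconst ((-1) ^ (n + 1) / of_nat n * of_nat n))"
    by (simp add: fps_const_mult pconst_mult flip: fps_of_nat pconst_of_nat)
  also have "(-1) ^ (n + 1) / of_nat n * of_nat n = ((-1) ^ (n - 1) :: rat)"
    using assms by (cases n) simp_all
  finally show ?thesis
    by (simp only: pconst_power[symmetric] pconst_minus pconst_one fps_const_power[symmetric]
        fps_const_neg[symmetric] fps_const_1_eq_1)
qed

lemma fps_mult_eq_0_cancel: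
  fixes G F :: "'a::comm_ring_1 fps"
  assumes "G * F = 0" "F $ 0 = 1"
  shows "G = 0"
proof -
  have "G = G * (F * fps_right_inverse F 1)"
    using fps_right_inverse[of F 1] assms(2) by simp
  also have "\<dots> = 0"
    using assms(1) by (simp flip: mult.assoc)
  finally show ?thesis .
qed

locale fps_derivation =
  fixes D :: "mpoly fps \<Rightarrow> mpoly fps"
  assumes D_add: "D (f + g) = D f + D g"
    and D_mult: "D (f * g) = D f * g + f * D g"
    and D_const: "D (fps_const (pconst c)) = 0" \<comment> \<open>not for all constants: euler acts on coefficients\<close>
    and D_nth_local: "(\<And>i. i \<le> n \<Longrightarrow> f $ i = g $ i) \<Longrightarrow> D f $ n = D g $ n"
begin

lemma D_zero: "D 0 = 0"
  using D_add[of 0 0] by simp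

lemma D_one: "D 1 = 0"
  using D_const[of 1] by (simp add: pconst_def)

lemma D_sum: "D (sum f A) = (\<Sum>x\<in>A. D (f x))"
  by (induction A rule: infinite_finite_induct) (simp_all add: D_zero D_add)

lemma D_power: "D (u ^ Suc n) = of_nat (Suc n) * u ^ n * D u"
proof (induction n)
  case 0
  show ?case using D_mult[of u 1] D_one by simp
next
  case (Suc n)
  have "D (u ^ Suc (Suc n)) = D u * u ^ Suc n + u * (of_nat (Suc n) * u ^ n * D u)"
    by (simp only: power_Suc[of u "Suc n"] D_mult Suc)
  then show ?case
    by (simp add: algebra_simps)
qed

lemma D_log_one_plus_trunc: "D (log_one_plus_trunc N u) = (\<Sum>j<N. (- u) ^ j) * D u"
proof -
  have "D (fps_const (pconst ((-1) ^ (n + 1) / of_nat n)) * u ^ n) = (- u) ^ (n - 1) * D u"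
    if n_pos: "n \<ge> 1" for n
  proof -
    obtain m where n: "n = Suc m"
      using n_pos by (cases n) auto
    have "D (fps_const (pconst ((-1) ^ (n + 1) / of_nat n)) * u ^ n) =
        (fps_const (pconst ((-1) ^ (n + 1) / of_nat n)) * of_nat n) * u ^ m * D u"
      by (simp only: D_mult D_const mult_zero_left add_0 n D_power mult.assoc)
    also have "\<dots> = (- u) ^ (n - 1) * D u"
      using log_coeff_mult_of_nat[OF n_pos] by (simp add: n power_minus[of u m])
    finally show ?thesis .
  qed
  then have "D (log_one_plus_trunc N u) = (\<Sum>n\<in>{1..N}. (- u) ^ (n - 1) * D u)"
    unfolding log_one_plus_trunc_def D_sum by (intro sum.cong) auto
  also have "\<dots> = (\<Sum>j<N. (- u) ^ j) * D u"
    by (simp add: sum.atLeast1_atMost_eq sum_distrib_right)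
  finally show ?thesis .
qed

lemma D_log:
  assumes F0: "F $ 0 = 1"
  shows "F * D (fps_log F) = D F"
proof (rule fps_ext)
  fix d
  define u where "u = F - 1"
  have u0: "u $ 0 = 0" using F0 by (simp add: u_def)
  \<comment> \<open>By locality, log F may be replaced by a truncation of log (1 + u), whose derivative
      telescopes against F = 1 - (- u).\<close>
  have "D (fps_log F) $ i = D (log_one_plus_trunc (Suc d) u) $ i" if "i \<le> d" for i
    using that by (intro D_nth_local) (simp add: u_def fps_log_nth_eq_trunc[OF F0, where N = "Suc d"])
  then have "(F * D (fps_log F)) $ d = (F * D (log_one_plus_trunc (Suc d) u)) $ d"
    by (simp add: fps_mult_nth)
  also have "F * D (log_one_plus_trunc (Suc d) u) = D u - (- u) ^ Suc d * D u"
  proof -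
    have "F = 1 - - u"
      by (simp add: u_def)
    then have "F * (\<Sum>j<Suc d. (- u) ^ j) = 1 - (- u) ^ Suc d"
      by (simp only: one_diff_power_eq)
    then show ?thesis
      by (simp only: D_log_one_plus_trunc mult.assoc[symmetric] left_diff_distrib mult_1_left)
  qed
  also have "(D u - (- u) ^ Suc d * D u) $ d = D u $ d"
    using startsby_zero_power_prefix[of "- u" "Suc d"] u0 by (simp add: fps_mult_nth)
  also have "D u $ d = D F $ d"
    using D_add[of u 1] by (simp add: u_def D_one)
  finally show "(F * D (fps_log F)) $ d = D F $ d" .
qed

end

definition fps_euler :: "mpoly fps \<Rightarrow> mpoly fps" where
  "fps_euler f = Abs_fps (\<lambda>n. euler (f $ n))"

interpretation fps_euler: fps_derivation fps_euler
proof
  show "fps_euler (f + g) = fps_euler f + fps_euler g" for f g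
    by (rule fps_ext) (simp add: fps_euler_def euler_add)
  show "fps_euler (f * g) = fps_euler f * g + f * fps_euler g" for f g
    by (rule fps_ext) (simp add: fps_euler_def fps_mult_nth euler_sum euler_mult sum.distrib)
  show "fps_euler (fps_const (pconst c)) = 0" for c
    by (rule fps_ext) (simp add: fps_euler_def)
  show "fps_euler f $ n = fps_euler g $ n" if "\<And>i. i \<le> n \<Longrightarrow> f $ i = g $ i" for f g n
    using that by (simp add: fps_euler_def)
qed

interpretation fps_XD: fps_derivation fps_XD
proof
  show "fps_XD (f * g) = fps_XD f * g + f * fps_XD g" for f g :: "mpoly fps"
    by (simp add: fps_XD_def algebra_simps)
  show "fps_XD f $ n = fps_XD g $ n" if "\<And>i. i \<le> n \<Longrightarrow> f $ i = g $ i" for f g :: "mpoly fps" and n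
    using that by simp
qed (simp_all add: fps_XD_def distrib_left)

definition step_weight :: "nat \<Rightarrow> nat \<Rightarrow> mpoly" where
  "step_weight a b = pvar (Y (b - a)) + pvar (X (b - a)) * of_nat a"

lemma chain_term_eq_prod_step_weight:
  "chain_term ds = pconst (1 / fact (length ds - 1)) *
     (\<Prod>i\<in>{1..length ds - 1}. step_weight (ds ! (i - 1)) (ds ! i))"
  by (simp add: chain_term_def step_weight_def Let_def)

lemma euler_step_weight [simp]: "euler (step_weight a b) = step_weight a b"
  by (simp add: step_weight_def euler_add euler_mult)

lemma euler_chain_term: "euler (chain_term ds) = of_nat (length ds - 1) * chain_term ds"
  by (simp add: chain_term_eq_prod_step_weight euler_mult euler_prod_linear_factors algebra_simps)

lemma strict_sorted_le_last:
  assumes "sorted_wrt (<) xs" "x \<in> set xs"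
  shows "x \<le> (last xs :: 'a::linorder)"
proof -
  obtain ys y where "xs = ys @ [y]"
    using assms(2) by (cases xs rule: rev_cases) auto
  then show ?thesis
    using assms by (auto simp: sorted_wrt_append)
qed

lemma chain_eq_sorted_list_of_set: "ds \<in> chains d \<Longrightarrow> sorted_list_of_set (set ds) = ds"
  by (simp add: chains_def strict_sorted_iff sorted_list_of_set.idem_if_sorted_distinct)

lemma set_chain_subset: "ds \<in> chains d \<Longrightarrow> set ds \<subseteq> {0..d}"
  using strict_sorted_le_last[of ds] by (auto simp: chains_def)

lemma chains_0: "chains 0 = {[0]}"
proof -
  have "ds = [0]" if ds: "ds \<in> chains 0" for ds
  proof -
    have "set ds = {0}"
      using ds set_chain_subset[OF ds] hd_in_set[of ds] by (auto simp: chains_def)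
    then show ?thesis
      using chain_eq_sorted_list_of_set[OF ds] by simp
  qed
  then show ?thesis
    by (auto simp: chains_def)
qed

lemma finite_chains: "finite (chains d)"
proof (rule finite_subset)
  show "chains d \<subseteq> sorted_list_of_set ` Pow {0..d}"
    using chain_eq_sorted_list_of_set set_chain_subset by (metis Pow_iff image_eqI subsetI)
qed simp

lemma chains_snoc_bij:
  assumes "d \<ge> 1"
  shows "bij_betw (\<lambda>(k, ds). ds @ [d]) (SIGMA k:{1..d}. chains (d - k)) (chains d)"
proof (rule bij_betw_byWitness[where f' = "\<lambda>ds. (d - last (butlast ds), butlast ds)"])
  show "(\<lambda>(k, ds). ds @ [d]) ` (SIGMA k:{1..d}. chains (d - k)) \<subseteq> chains d"
  proof clarify
    fix k ds assume "k \<in> {1..d}" "ds \<in> chains (d - k)"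
    then show "ds @ [d] \<in> chains d"
      using set_chain_subset[of ds "d - k"] by (fastforce simp: chains_def sorted_wrt_append)
  qed
  show "(\<lambda>ds. (d - last (butlast ds), butlast ds)) ` chains d \<subseteq> (SIGMA k:{1..d}. chains (d - k))"
  proof (rule image_subsetI)
    fix ds assume ds: "ds \<in> chains d"
    then obtain ds' where ds': "ds = ds' @ [d]" "ds' \<noteq> []"
      using assms by (cases ds rule: rev_cases) (auto simp: chains_def hd_append split: if_splits)
    have "last ds' < d"
      using ds ds' by (auto simp: chains_def sorted_wrt_append)
    moreover have "ds' \<in> chains (last ds')"
      using ds ds' by (auto simp: chains_def sorted_wrt_append)
    ultimately show "(d - last (butlast ds), butlast ds) \<in> (SIGMA k:{1..d}. chains (d - k))"
      using ds' by (simp add: diff_diff_cancel less_imp_le)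
  qed
qed (auto simp: chains_def)

lemma sum_chains_snoc:
  assumes "d \<ge> 1"
  shows "(\<Sum>ds\<in>chains d. g ds) = (\<Sum>k\<in>{1..d}. \<Sum>ds\<in>chains (d - k). g (ds @ [d]))"
proof -
  have "(\<Sum>ds\<in>chains d. g ds) = (\<Sum>(k, ds)\<in>(SIGMA k:{1..d}. chains (d - k)). g (ds @ [d]))"
    using sum.reindex_bij_betw[OF chains_snoc_bij[OF assms], of g] by (simp add: prod.case_distrib)
  also have "\<dots> = (\<Sum>k\<in>{1..d}. \<Sum>ds\<in>chains (d - k). g (ds @ [d]))"
    by (rule sum.Sigma[symmetric]) (simp_all add: finite_chains)
  finally show ?thesis .
qed

lemma euler_chain_term_snoc:
  assumes "ds \<in> chains a" "a < d"
  shows "euler (chain_term (ds @ [d])) = chain_term ds * step_weight a d"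
proof -
  obtain r where r: "length ds = Suc r"
    using assms(1) by (cases ds) (auto simp: chains_def)
  have "ds ! r = a"
    using assms(1) r by (auto simp: chains_def last_conv_nth)
  moreover have "(\<Prod>i\<in>{1..r}. step_weight ((ds @ [d]) ! (i - 1)) ((ds @ [d]) ! i)) =
      (\<Prod>i\<in>{1..r}. step_weight (ds ! (i - 1)) (ds ! i))"
    using r by (intro prod.cong) (auto simp: nth_append)
  ultimately have prod: "(\<Prod>i\<in>{1..Suc r}. step_weight ((ds @ [d]) ! (i - 1)) ((ds @ [d]) ! i)) =
      (\<Prod>i\<in>{1..r}. step_weight (ds ! (i - 1)) (ds ! i)) * step_weight a d"
    using r by (simp add: prod.cl_ivl_Suc nth_append)
  have "of_nat (Suc r) * (1 / fact (Suc r)) = (1 / fact r :: rat)"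
    by (simp add: fact_Suc del: of_nat_Suc)
  then have coeff: "of_nat (Suc r) * pconst (1 / fact (Suc r)) = pconst (1 / fact r)"
    by (simp add: pconst_mult flip: pconst_of_nat)
  have "euler (chain_term (ds @ [d])) = of_nat (Suc r) * chain_term (ds @ [d])"
    using r by (simp add: euler_chain_term)
  also have "\<dots> = (of_nat (Suc r) * pconst (1 / fact (Suc r))) *
      (\<Prod>i\<in>{1..r}. step_weight (ds ! (i - 1)) (ds ! i)) * step_weight a d"
    by (simp only: chain_term_eq_prod_step_weight length_append_singleton r diff_Suc_1 prod mult.assoc)
  also have "\<dots> = chain_term ds * step_weight a d"
    by (simp only: coeff chain_term_eq_prod_step_weight r diff_Suc_1)
  finally show ?thesis .
qed

definition y_series :: "mpoly fps" where
  "y_series = Abs_fps (\<lambda>k. if k = 0 then 0 else pvar (Y k))"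

definition x_series :: "mpoly fps" where
  "x_series = Abs_fps (\<lambda>k. if k = 0 then 0 else pvar (X k))"

lemma F_series_nth_0: "F_series $ 0 = 1"
  by (simp add: F_series_def chains_0 chain_term_def)

lemma euler_F_series_nth:
  "euler (F_series $ d) = (\<Sum>k\<in>{1..d}. F_series $ (d - k) * step_weight (d - k) d)"
proof (cases "d = 0")
  case True
  then show ?thesis
    by (simp add: F_series_nth_0)
next
  case False
  then have "euler (F_series $ d) =
      (\<Sum>k\<in>{1..d}. \<Sum>ds\<in>chains (d - k). chain_term ds * step_weight (d - k) d)"
    by (simp add: F_series_def euler_sum sum_chains_snoc euler_chain_term_snoc)
  then show ?thesis
    by (simp add: F_series_def sum_distrib_right)
qed

lemma fps_euler_F_series: "fps_euler F_series = y_series * F_series + x_series * fps_XD F_series"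
proof (rule fps_ext)
  fix d
  have "(y_series * F_series + x_series * fps_XD F_series) $ d =
      (\<Sum>i\<in>{1..d}. y_series $ i * F_series $ (d - i) +
        x_series $ i * (of_nat (d - i) * F_series $ (d - i)))"
    by (simp add: fps_mult_nth sum.distrib sum.atLeast_Suc_atMost y_series_def x_series_def)
  also have "\<dots> = (\<Sum>k\<in>{1..d}. F_series $ (d - k) * step_weight (d - k) d)"
    by (intro sum.cong) (auto simp: y_series_def x_series_def step_weight_def algebra_simps)
  finally show "fps_euler F_series $ d = (y_series * F_series + x_series * fps_XD F_series) $ d"
    by (simp add: fps_euler_def euler_F_series_nth)
qed

lemma fps_euler_log_F_series:
  "fps_euler (fps_log F_series) = y_series + x_series * fps_XD (fps_log F_series)"
proof -
  let ?H = "fps_log F_series"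
  have "(fps_euler ?H - (y_series + x_series * fps_XD ?H)) * F_series =
      F_series * fps_euler ?H - (y_series * F_series + x_series * (F_series * fps_XD ?H))"
    by (simp add: algebra_simps)
  also have "\<dots> = 0"
    by (simp add: fps_euler.D_log fps_XD.D_log F_series_nth_0 fps_euler_F_series)
  finally have "fps_euler ?H - (y_series + x_series * fps_XD ?H) = 0"
    using F_series_nth_0 by (rule fps_mult_eq_0_cancel)
  then show ?thesis
    by simp
qed

lemma keys_of_nat_mult: "Poly_Mapping.keys ((of_nat c :: mpoly) * p) \<subseteq> Poly_Mapping.keys p"
proof
  fix m assume "m \<in> Poly_Mapping.keys (of_nat c * p)"
  then obtain a b
    where "m = a + b" "a \<in> Poly_Mapping.keys (of_nat c :: mpoly)" "b \<in> Poly_Mapping.keys p"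
    using keys_mult by blast
  moreover have "Poly_Mapping.keys (of_nat c :: mpoly) \<subseteq> {0}"
    by (simp flip: single_of_nat)
  ultimately show "m \<in> Poly_Mapping.keys p"
    by auto
qed

lemma keys_pvar_mult:
  "m \<in> Poly_Mapping.keys (pvar v * p) \<Longrightarrow> \<exists>b\<in>Poly_Mapping.keys p. m = Poly_Mapping.single v 1 + b"
  using keys_mult[of "pvar v" p] by (auto simp: pvar_def)

lemma keys_log_F_series_nth:
  assumes "m \<in> Poly_Mapping.keys (fps_log F_series $ d)" and "total_degree m \<noteq> 0"
  shows "m = Poly_Mapping.single (Y d) 1 \<or>
    (\<exists>i b. b \<in> Poly_Mapping.keys (fps_log F_series $ (d - i)) \<and> m = Poly_Mapping.single (X i) 1 + b)"
proof -
  let ?H = "fps_log F_series"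
  have "m \<in> Poly_Mapping.keys (euler (?H $ d))"
    using assms by (simp add: in_keys_iff lookup_euler)
  also have "euler (?H $ d) =
      y_series $ d + (\<Sum>i\<in>{0..d}. x_series $ i * (of_nat (d - i) * ?H $ (d - i)))"
    using arg_cong[OF fps_euler_log_F_series, of "\<lambda>f. f $ d"]
    by (simp add: fps_euler_def fps_mult_nth)
  finally consider "m \<in> Poly_Mapping.keys (y_series $ d)"
    | i where "m \<in> Poly_Mapping.keys (x_series $ i * (of_nat (d - i) * ?H $ (d - i)))"
    using keys_add[of "y_series $ d"]
      keys_sum[of "\<lambda>i. x_series $ i * (of_nat (d - i) * ?H $ (d - i))"] by blast
  then show ?thesis
  proof cases
    case 1
    then show ?thesis
      by (auto simp: y_series_def pvar_def split: if_splits)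
  next
    case (2 i)
    then have "m \<in> Poly_Mapping.keys (pvar (X i) * (of_nat (d - i) * ?H $ (d - i)))"
      by (simp add: x_series_def split: if_splits)
    then show ?thesis
      using keys_pvar_mult keys_of_nat_mult by blast
  qed
qed

theorem proposition8p1:
  shows "\<forall>d. \<forall>m \<in> Poly_Mapping.keys (fps_nth (fps_log F_series) d). y_degree m \<le> 1"
proof (intro allI ballI)
  fix d m
  assume "m \<in> Poly_Mapping.keys (fps_log F_series $ d)"
  then show "y_degree m \<le> 1"
  proof (induction "total_degree m" arbitrary: d m rule: less_induct)
    case less
    consider "total_degree m = 0" | "m = Poly_Mapping.single (Y d) 1"
      | i b where "b \<in> Poly_Mapping.keys (fps_log F_series $ (d - i))" "m = Poly_Mapping.single (X i) 1 + b"
      using keys_log_F_series_nth[OF less.prems] by blast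
    then show ?case
    proof cases
      case 1
      then show ?thesis
        using y_degree_le_total_degree[of m] by simp
    next
      case 2
      then show ?thesis
        by simp
    next
      case (3 i b)
      then show ?thesis
        using less.hyps[of b "d - i"] by (simp add: y_degree_add weighted_degree_add)
    qed
  qed
qed

end
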